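(* Let $F$ be a field of characteristic zero, $G$ a finite group, and $A$, $B$ $G$-graded PI-algebras over $F$ such that $T_G(A)=T_G(B)$. Then for all positive integers $d_1,\dots,d_m$, \[T_G(UT(d_1,\dots,d_m;A))=T_G(UT(d_1,\dots,d_m;B)).\] Consequently, for every $n\in\mathbb{N}$, $T_G(M_n(A))=T_G(M_n(B))$.
   Context: All algebras are associative and unitary. $F\langle X\rangle$ is the free associative algebra on $X=\bigcup_{g\in G}X^g$ (disjoint countable sets of variables of degree $g$), graded by $G$ in the natural way. For a $G$-graded algebra $A=\bigoplus_gA^g$, $T_G(A)$ is the ideal of graded polynomial identities of $A$, i.e. graded polynomials $f(x_1,\dots,x_t)$ with $f(a_1,\dots,a_t)=0$ for all $a_i\in A^{\deg(x_i)}$. $UT(d_1,\dots,d_m;A)$ is the algebra of block upper-triangular matrices in $M_{d_1+\cdots+d_m}(A)$ with $(r,s)$ block ($r\le s$) an arbitrary $d_r\times d_s$ matrix over $A$ and zero blocks below the diagonal; it and $M_n(A)$ are $G$-graded by letting the degree-$g$ component consist of matrices all of whose entries lie in $A^g$. *)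

theory Defs
  imports Main "HOL-Library.Poly_Mapping" "HOL-Library.Function_Algebras"
begin

text \<open>A unitary associative F-algebra is a ring 'a (class ring_1) together with the
structure map emb : F -> A, a unital ring homomorphism into the centre;
the scalar action is c . a = emb c * a.\<close>

definition algebra_over :: "('f::field \<Rightarrow> 'a::ring_1) \<Rightarrow> bool" where
  "algebra_over emb \<longleftrightarrow>
     emb 1 = 1 \<and>
     (\<forall>x y. emb (x + y) = emb x + emb y) \<and>
     (\<forall>x y. emb (x * y) = emb x * emb y) \<and>
     (\<forall>x a. emb x * a = a * emb x)"

text \<open>G-grading A = direct sum of subspaces A^g with A^g A^h \<subseteq> A^(g h).
The finite group G is written additively (class group_add, not necessarily abelian).\<close>

definition graded_algebra ::
  "('f::field \<Rightarrow> 'a::ring_1) \<Rightarrow> ('g::{group_add,finite} \<Rightarrow> 'a set) \<Rightarrow> bool" where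
  "graded_algebra emb Agr \<longleftrightarrow>
     algebra_over emb \<and>
     (\<forall>g. 0 \<in> Agr g \<and> (\<forall>a\<in>Agr g. \<forall>b\<in>Agr g. a + b \<in> Agr g)
          \<and> (\<forall>c. \<forall>a\<in>Agr g. emb c * a \<in> Agr g)) \<and>
     (\<forall>a. \<exists>!comp :: 'g \<Rightarrow> 'a. (\<forall>g. comp g \<in> Agr g) \<and> a = (\<Sum>g\<in>UNIV. comp g)) \<and>
     (\<forall>g h. \<forall>a\<in>Agr g. \<forall>b\<in>Agr h. a * b \<in> Agr (g + h))"

text \<open>An element of the free algebra F<V> is a finitely supported F-valued function
on words (lists) of variables. Graded variables: V = nat \<times> G, variable (i,g) has degree g.\<close>

type_synonym ('f, 'v) ncpoly = "'v list \<Rightarrow>\<^sub>0 'f"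

definition peval ::
  "('b \<Rightarrow> 'b \<Rightarrow> 'b) \<Rightarrow> 'b \<Rightarrow> ('f \<Rightarrow> 'b \<Rightarrow> 'b) \<Rightarrow> ('v \<Rightarrow> 'b)
   \<Rightarrow> ('f::zero, 'v) ncpoly \<Rightarrow> 'b::comm_monoid_add" where
  "peval mul one smul \<phi> f =
     (\<Sum>w\<in>Poly_Mapping.keys f. smul (Poly_Mapping.lookup f w) (foldr (\<lambda>x acc. mul (\<phi> x) acc) w one))"

definition gT ::
  "('b::comm_monoid_add \<Rightarrow> 'b \<Rightarrow> 'b) \<Rightarrow> 'b \<Rightarrow> ('f \<Rightarrow> 'b \<Rightarrow> 'b) \<Rightarrow> ('g \<Rightarrow> 'b set)
   \<Rightarrow> ('f::zero, nat \<times> 'g) ncpoly set" where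
  "gT mul one smul cmp =
     {f. \<forall>\<phi>. (\<forall>x. \<phi> x \<in> cmp (snd x)) \<longrightarrow> peval mul one smul \<phi> f = 0}"

definition T_G :: "('f::field \<Rightarrow> 'a::ring_1) \<Rightarrow> ('g \<Rightarrow> 'a set) \<Rightarrow> ('f, nat \<times> 'g) ncpoly set" where
  "T_G emb Agr = gT (*) 1 (\<lambda>c a. emb c * a) Agr"

definition pi_algebra :: "('f::field \<Rightarrow> 'a::ring_1) \<Rightarrow> bool" where
  "pi_algebra emb \<longleftrightarrow>
     (\<exists>f :: ('f, nat) ncpoly. f \<noteq> 0 \<and>
        (\<forall>\<phi>. peval (*) 1 (\<lambda>c a. emb c * a) \<phi> f = 0))"

text \<open>n\<times>n matrices over A are functions nat \<Rightarrow> nat \<Rightarrow> 'a vanishing outside {0..<n}^2.\<close>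

definition mat_mul :: "nat \<Rightarrow> (nat \<Rightarrow> nat \<Rightarrow> 'a::ring_1) \<Rightarrow> (nat \<Rightarrow> nat \<Rightarrow> 'a) \<Rightarrow> nat \<Rightarrow> nat \<Rightarrow> 'a" where
  "mat_mul n M N = (\<lambda>i j. if i < n \<and> j < n then (\<Sum>k<n. M i k * N k j) else 0)"

definition mat_one :: "nat \<Rightarrow> nat \<Rightarrow> nat \<Rightarrow> 'a::ring_1" where
  "mat_one n = (\<lambda>i j. if i < n \<and> j < n \<and> i = j then 1 else 0)"

definition mat_smul :: "('f \<Rightarrow> 'a::ring_1) \<Rightarrow> 'f \<Rightarrow> (nat \<Rightarrow> nat \<Rightarrow> 'a) \<Rightarrow> nat \<Rightarrow> nat \<Rightarrow> 'a" where
  "mat_smul emb c M = (\<lambda>i j. emb c * M i j)"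

text \<open>Block index of row/column i for block sizes ds = [d_1,...,d_m] (0-based).\<close>

definition blk :: "nat list \<Rightarrow> nat \<Rightarrow> nat" where
  "blk ds i = (LEAST r. i < sum_list (take (Suc r) ds))"

text \<open>Degree-g component of UT(d_1,...,d_m;A): block upper triangular matrices with
all entries in A^g.\<close>

definition ut_comp :: "nat list \<Rightarrow> ('g \<Rightarrow> 'a::ring_1 set) \<Rightarrow> 'g \<Rightarrow> (nat \<Rightarrow> nat \<Rightarrow> 'a) set" where
  "ut_comp ds Agr g =
     {M. \<forall>i j. (i < sum_list ds \<and> j < sum_list ds \<longrightarrow> M i j \<in> Agr g)
            \<and> (\<not> (i < sum_list ds \<and> j < sum_list ds) \<longrightarrow> M i j = 0)
            \<and> (i < sum_list ds \<and> j < sum_list ds \<and> blk ds j < blk ds i \<longrightarrow> M i j = 0)}"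

definition mn_comp :: "nat \<Rightarrow> ('g \<Rightarrow> 'a::ring_1 set) \<Rightarrow> 'g \<Rightarrow> (nat \<Rightarrow> nat \<Rightarrow> 'a) set" where
  "mn_comp n Agr g =
     {M. \<forall>i j. (i < n \<and> j < n \<longrightarrow> M i j \<in> Agr g) \<and> (\<not> (i < n \<and> j < n) \<longrightarrow> M i j = 0)}"

definition T_G_UT :: "nat list \<Rightarrow> ('f::field \<Rightarrow> 'a::ring_1) \<Rightarrow> ('g \<Rightarrow> 'a set) \<Rightarrow> ('f, nat \<times> 'g) ncpoly set" where
  "T_G_UT ds emb Agr =
     gT (mat_mul (sum_list ds)) (mat_one (sum_list ds)) (mat_smul emb) (ut_comp ds Agr)"

definition T_G_M :: "nat \<Rightarrow> ('f::field \<Rightarrow> 'a::ring_1) \<Rightarrow> ('g \<Rightarrow> 'a set) \<Rightarrow> ('f, nat \<times> 'g) ncpoly set" where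
  "T_G_M n emb Agr = gT (mat_mul n) (mat_one n) (mat_smul emb) (mn_comp n Agr)"

end

theory Submission
  imports Defs "HOL-Library.Nat_Bijection"
begin

text \<open>Fix a set R of admissible positions (i, j). A generic matrix of degree g supported on R
has as (k, l) entry an independent graded variable of degree g, for each (k, l) \<in> R, and the
(i, j) entry of a product of such matrices is the sum, over all paths i = k0, k1, \<dots>, kt = j
with consecutive positions in R, of the products of the corresponding entry variables.
So a graded polynomial f vanishes on the matrices supported on R with entries in A iff each of
these entry polynomials of f is a graded identity of A; this depends on A only through T_G(A).
Block upper triangular and full matrix algebras are instances.\<close>

text \<open>Via prod_encode, each graded variable x and position (k, l) give a fresh variable of the
same degree; distinct triples give distinct variables.\<close>

definition entry_var :: "nat \<times> 'g \<Rightarrow> nat \<Rightarrow> nat \<Rightarrow> nat \<times> 'g" where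
  "entry_var x k l = (prod_encode (fst x, prod_encode (k, l)), snd x)"

fun path_words ::
  "nat \<Rightarrow> (nat \<Rightarrow> nat \<Rightarrow> bool) \<Rightarrow> (nat \<times> 'g) list \<Rightarrow> nat \<Rightarrow> nat \<Rightarrow> (nat \<times> 'g) list list" where
  "path_words n R [] i j = (if i = j then [[]] else [])"
| "path_words n R (x # w) i j =
     concat (map (\<lambda>k. map (\<lambda>u. entry_var x i k # u) (path_words n R w k j)) (filter (R i) [0..<n]))"

definition entry_poly ::
  "nat \<Rightarrow> (nat \<Rightarrow> nat \<Rightarrow> bool) \<Rightarrow> nat \<Rightarrow> nat \<Rightarrow> ('f::field, nat \<times> 'g) ncpoly \<Rightarrow> ('f, nat \<times> 'g) ncpoly" where
  "entry_poly n R i j f =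
     (\<Sum>w\<in>Poly_Mapping.keys f.
        sum_list (map (\<lambda>u. Poly_Mapping.single u (Poly_Mapping.lookup f w)) (path_words n R w i j)))"

definition pattern_comp :: "(nat \<Rightarrow> nat \<Rightarrow> bool) \<Rightarrow> ('g \<Rightarrow> 'a::ring_1 set) \<Rightarrow> 'g \<Rightarrow> (nat \<Rightarrow> nat \<Rightarrow> 'a) set" where
  "pattern_comp R Agr g = {M. \<forall>i j. (R i j \<longrightarrow> M i j \<in> Agr g) \<and> (\<not> R i j \<longrightarrow> M i j = 0)}"

lemma algebra_over_zero: "algebra_over emb \<Longrightarrow> emb 0 = 0"
  unfolding algebra_over_def by (metis add_cancel_right_right add_0)

lemma sum_list_concat: "sum_list (concat xss) = sum_list (map sum_list (xss :: 'a::monoid_add list list))"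
  by (induction xss) auto

lemma sum_fun_apply2: "(\<Sum>w\<in>S. F w) i j = (\<Sum>w\<in>S. F w i j)"
proof (cases "finite S")
  case True
  then show ?thesis by (induction S rule: finite_induct) (auto simp: plus_fun_def zero_fun_def)
qed (simp add: zero_fun_def)

context
  fixes smul :: "'f::comm_monoid_add \<Rightarrow> 'b \<Rightarrow> 'b::comm_monoid_add"
  assumes smul_zero: "\<And>a. smul 0 a = 0"
begin

lemma peval_keys_superset:
  assumes "finite S" "Poly_Mapping.keys p \<subseteq> S"
  shows "peval mul one smul \<phi> p = (\<Sum>w\<in>S. smul (Poly_Mapping.lookup p w) (foldr (\<lambda>x acc. mul (\<phi> x) acc) w one))"
  unfolding peval_def
  by (rule sum.mono_neutral_left) (use assms in \<open>auto simp: in_keys_iff smul_zero\<close>)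

lemma peval_single:
  "peval mul one smul \<phi> (Poly_Mapping.single u c) = smul c (foldr (\<lambda>x acc. mul (\<phi> x) acc) u one)"
  unfolding peval_def by (cases "c = 0") (auto simp: smul_zero)

lemma peval_zero: "peval mul one smul \<phi> 0 = 0"
  unfolding peval_def by simp

context
  assumes smul_add: "\<And>a b x. smul (a + b) x = smul a x + smul b x"
begin

lemma peval_add: "peval mul one smul \<phi> (p + q) = peval mul one smul \<phi> p + peval mul one smul \<phi> q"
proof -
  let ?S = "Poly_Mapping.keys p \<union> Poly_Mapping.keys q"
  let ?m = "\<lambda>w. foldr (\<lambda>x acc. mul (\<phi> x) acc) w one"
  have "peval mul one smul \<phi> (p + q) = (\<Sum>w\<in>?S. smul (Poly_Mapping.lookup (p + q) w) (?m w))"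
    by (rule peval_keys_superset) (use keys_add[of p q] in auto)
  also have "\<dots> = (\<Sum>w\<in>?S. smul (Poly_Mapping.lookup p w) (?m w)) + (\<Sum>w\<in>?S. smul (Poly_Mapping.lookup q w) (?m w))"
    by (simp add: lookup_add smul_add sum.distrib)
  also have "\<dots> = peval mul one smul \<phi> p + peval mul one smul \<phi> q"
    by (subst (1 2) peval_keys_superset[where S = ?S]) auto
  finally show ?thesis .
qed

lemma peval_sum_list: "peval mul one smul \<phi> (sum_list (map F xs)) = (\<Sum>x\<leftarrow>xs. peval mul one smul \<phi> (F x))"
  by (induction xs) (simp_all add: peval_zero peval_add)

lemma peval_sum: "peval mul one smul \<phi> (sum F S) = (\<Sum>x\<in>S. peval mul one smul \<phi> (F x))"
proof (cases "finite S")
  case True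
  then show ?thesis by (induction S rule: finite_induct) (simp_all add: peval_zero peval_add)
qed (simp add: peval_zero)

end

end

lemma matrix_word_entry:
  assumes "\<And>x k l. \<not> R k l \<Longrightarrow> \<Phi> x k l = (0::'a::ring_1)"
    and "\<And>x k l. R k l \<Longrightarrow> \<psi> (entry_var x k l) = \<Phi> x k l"
    and "i < n" "j < n"
  shows "foldr (\<lambda>x acc. mat_mul n (\<Phi> x) acc) w (mat_one n) i j
       = (\<Sum>u\<leftarrow>path_words n R w i j. foldr (\<lambda>y acc. \<psi> y * acc) u 1)"
  using \<open>i < n\<close>
proof (induction w arbitrary: i)
  case Nil
  then show ?case using \<open>j < n\<close> by (simp add: mat_one_def)
next
  case (Cons x w)
  let ?P = "\<lambda>k. \<Sum>u\<leftarrow>path_words n R w k j. foldr (\<lambda>y acc. \<psi> y * acc) u 1"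
  have "foldr (\<lambda>x acc. mat_mul n (\<Phi> x) acc) (x # w) (mat_one n) i j
      = (\<Sum>k<n. \<Phi> x i k * foldr (\<lambda>x acc. mat_mul n (\<Phi> x) acc) w (mat_one n) k j)"
    using Cons.prems \<open>j < n\<close> by (simp add: mat_mul_def)
  also have "\<dots> = (\<Sum>k<n. if R i k then \<psi> (entry_var x i k) * ?P k else 0)"
    using Cons.IH by (intro sum.cong) (auto simp: assms(1,2))
  also have "\<dots> = (\<Sum>k\<leftarrow>[0..<n]. if R i k then \<psi> (entry_var x i k) * ?P k else 0)"
    by (simp add: sum_set_upt_conv_sum_list_nat[symmetric] lessThan_atLeast0)
  also have "\<dots> = (\<Sum>k\<leftarrow>filter (R i) [0..<n]. \<psi> (entry_var x i k) * ?P k)"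
    by (simp add: sum_list_map_filter')
  also have "\<dots> = (\<Sum>u\<leftarrow>path_words n R (x # w) i j. foldr (\<lambda>y acc. \<psi> y * acc) u 1)"
    by (simp add: map_concat sum_list_concat o_def sum_list_const_mult)
  finally show ?case .
qed

lemma peval_matrix_entry_outside:
  assumes "\<not> (i < n \<and> j < n)"
  shows "peval (mat_mul n) (mat_one n) (mat_smul emb) \<Phi> f i j = (0::'a::ring_1)"
proof -
  have "foldr (\<lambda>x acc. mat_mul n (\<Phi> x) acc) w (mat_one n) i j = 0" for w
    using assms by (cases w) (auto simp: mat_one_def mat_mul_def)
  then show ?thesis
    unfolding peval_def sum_fun_apply2 mat_smul_def by simp
qed

lemma peval_matrix_entry:
  assumes emb: "algebra_over emb"
    and "\<And>x k l. \<not> R k l \<Longrightarrow> \<Phi> x k l = (0::'a::ring_1)"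
    and "\<And>x k l. R k l \<Longrightarrow> \<psi> (entry_var x k l) = \<Phi> x k l"
    and "i < n" "j < n"
  shows "peval (mat_mul n) (mat_one n) (mat_smul emb) \<Phi> f i j
       = peval (*) 1 (\<lambda>c a. emb c * a) \<psi> (entry_poly n R i j f)"
proof -
  let ?smul = "\<lambda>c a. emb c * a"
  have smul_zero: "\<And>a. ?smul 0 a = 0"
    using algebra_over_zero[OF emb] by simp
  have smul_add: "\<And>a b x. ?smul (a + b) x = ?smul a x + ?smul b x"
    using emb unfolding algebra_over_def by (simp add: distrib_right)
  have "peval (mat_mul n) (mat_one n) (mat_smul emb) \<Phi> f i j
     = (\<Sum>w\<in>Poly_Mapping.keys f. emb (Poly_Mapping.lookup f w) *
          (\<Sum>u\<leftarrow>path_words n R w i j. foldr (\<lambda>y acc. \<psi> y * acc) u 1))"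
    unfolding peval_def sum_fun_apply2 mat_smul_def
    using matrix_word_entry[of R \<Phi> \<psi>, OF assms(2-5)] by simp
  also have "\<dots> = peval (*) 1 ?smul \<psi> (entry_poly n R i j f)"
    unfolding entry_poly_def
    by (simp add: peval_sum[where smul = ?smul, OF smul_zero smul_add]
        peval_sum_list[where smul = ?smul, OF smul_zero smul_add]
        peval_single[where smul = ?smul, OF smul_zero] sum_list_const_mult o_def)
  finally show ?thesis .
qed

lemma gT_pattern_iff_entry_polys:
  fixes emb :: "'f::field \<Rightarrow> 'a::ring_1" and Agr :: "'g \<Rightarrow> 'a set"
  assumes emb: "algebra_over emb" and zero_mem: "\<And>g. 0 \<in> Agr g"
  shows "f \<in> gT (mat_mul n) (mat_one n) (mat_smul emb) (pattern_comp R Agr)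
     \<longleftrightarrow> (\<forall>i<n. \<forall>j<n. entry_poly n R i j f \<in> T_G emb Agr)"
proof (intro iffI allI impI)
  fix i j
  assume f: "f \<in> gT (mat_mul n) (mat_one n) (mat_smul emb) (pattern_comp R Agr)"
    and "i < n" "j < n"
  show "entry_poly n R i j f \<in> T_G emb Agr"
    unfolding T_G_def gT_def
  proof (intro CollectI allI impI)
    fix \<psi> :: "nat \<times> 'g \<Rightarrow> 'a"
    assume \<psi>: "\<forall>x. \<psi> x \<in> Agr (snd x)"
    define \<Phi> where "\<Phi> x k l = (if R k l then \<psi> (entry_var x k l) else 0)" for x k l
    have "\<forall>x. \<Phi> x \<in> pattern_comp R Agr (snd x)"
      using \<psi> by (auto simp: \<Phi>_def pattern_comp_def entry_var_def)
    then have "peval (mat_mul n) (mat_one n) (mat_smul emb) \<Phi> f i j = 0"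
      using f unfolding gT_def by simp
    moreover have "peval (mat_mul n) (mat_one n) (mat_smul emb) \<Phi> f i j
        = peval (*) 1 (\<lambda>c a. emb c * a) \<psi> (entry_poly n R i j f)"
      by (rule peval_matrix_entry[OF emb]) (use \<open>i < n\<close> \<open>j < n\<close> in \<open>auto simp: \<Phi>_def\<close>)
    ultimately show "peval (*) 1 (\<lambda>c a. emb c * a) \<psi> (entry_poly n R i j f) = 0"
      by simp
  qed
next
  assume entries: "\<forall>i<n. \<forall>j<n. entry_poly n R i j f \<in> T_G emb Agr"
  show "f \<in> gT (mat_mul n) (mat_one n) (mat_smul emb) (pattern_comp R Agr)"
    unfolding gT_def
  proof (intro CollectI allI impI ext)
    fix \<Phi> :: "nat \<times> 'g \<Rightarrow> nat \<Rightarrow> nat \<Rightarrow> 'a" and i j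
    assume \<Phi>: "\<forall>x. \<Phi> x \<in> pattern_comp R Agr (snd x)"
    define \<psi> where "\<psi> v = (case prod_decode (fst v) of (m, kl) \<Rightarrow>
        case prod_decode kl of (k, l) \<Rightarrow> \<Phi> (m, snd v) k l)" for v
    have \<psi>: "\<forall>v. \<psi> v \<in> Agr (snd v)"
      using \<Phi> zero_mem by (auto simp: \<psi>_def pattern_comp_def split: prod.split) metis
    show "peval (mat_mul n) (mat_one n) (mat_smul emb) \<Phi> f i j = 0 i j"
    proof (cases "i < n \<and> j < n")
      case True
      have "peval (mat_mul n) (mat_one n) (mat_smul emb) \<Phi> f i j
          = peval (*) 1 (\<lambda>c a. emb c * a) \<psi> (entry_poly n R i j f)"
        by (rule peval_matrix_entry[OF emb])
          (use True \<Phi> in \<open>auto simp: \<psi>_def entry_var_def pattern_comp_def\<close>)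
      also have "\<dots> = 0"
        using entries True \<psi> unfolding T_G_def gT_def by blast
      finally show ?thesis by simp
    qed (simp add: peval_matrix_entry_outside)
  qed
qed

lemma gT_pattern_eq:
  assumes "algebra_over embA" "\<And>g. 0 \<in> Agr g" "algebra_over embB" "\<And>g. 0 \<in> Bgr g"
    and "T_G embA Agr = T_G embB Bgr"
  shows "gT (mat_mul n) (mat_one n) (mat_smul embA) (pattern_comp R Agr)
       = gT (mat_mul n) (mat_one n) (mat_smul embB) (pattern_comp R Bgr)"
  using assms by (simp add: set_eq_iff gT_pattern_iff_entry_polys)

lemma ut_comp_eq_pattern_comp:
  assumes "\<And>g. 0 \<in> Agr g"
  shows "ut_comp ds Agr
       = pattern_comp (\<lambda>i j. i < sum_list ds \<and> j < sum_list ds \<and> \<not> blk ds j < blk ds i) Agr"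
  unfolding ut_comp_def pattern_comp_def using assms by (intro ext) (auto, metis+)

lemma mn_comp_eq_pattern_comp: "mn_comp n Agr = pattern_comp (\<lambda>i j. i < n \<and> j < n) Agr"
  unfolding mn_comp_def pattern_comp_def by (intro ext) auto

theorem lemma5p3:
  fixes embA :: "'f::field_char_0 \<Rightarrow> 'a::ring_1"
    and embB :: "'f \<Rightarrow> 'b::ring_1"
    and Agr :: "'g::{group_add,finite} \<Rightarrow> 'a set"
    and Bgr :: "'g \<Rightarrow> 'b set"
  assumes "graded_algebra embA Agr" and "graded_algebra embB Bgr"
    and "pi_algebra embA" and "pi_algebra embB"
    and "T_G embA Agr = T_G embB Bgr"
  shows "(\<forall>ds. ds \<noteq> [] \<and> (\<forall>d\<in>set ds. 0 < d) \<longrightarrow> T_G_UT ds embA Agr = T_G_UT ds embB Bgr)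
         \<and> (\<forall>n. T_G_M n embA Agr = T_G_M n embB Bgr)"
proof -
  have A: "algebra_over embA" "\<And>g. 0 \<in> Agr g"
    using assms(1) unfolding graded_algebra_def by auto
  have B: "algebra_over embB" "\<And>g. 0 \<in> Bgr g"
    using assms(2) unfolding graded_algebra_def by auto
  note pattern_eq = gT_pattern_eq[OF A B assms(5)]
  show ?thesis
    unfolding T_G_UT_def T_G_M_def ut_comp_eq_pattern_comp[OF A(2)] ut_comp_eq_pattern_comp[OF B(2)]
      mn_comp_eq_pattern_comp pattern_eq
    by simp
qed

end
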